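(* Let $G$ be a connected nontrivial graph with $m$ vertices and let $n\geq4$. If $\min\{n^2\lambda(G),\ (n-1)(m+2e(G))\}\geq 2n\delta(G)+2n-4$, then $G\boxtimes K_n$ is maximally restricted edge-connected, i.e. $\lambda'(G\boxtimes K_n)=\xi(G\boxtimes K_n)$.
   Context: All graphs are finite, simple and undirected; "nontrivial" means having at least two vertices. $K_n$ denotes the complete graph on $n$ vertices. For a graph $G$: $e(G)=|E(G)|$; $\delta(G)$ is the minimum degree; $\lambda(G)$ is the edge-connectivity; for an edge $uv$, its edge-degree is $d_G(u)+d_G(v)-2$, and $\xi(G)$ is the minimum edge-degree over all edges. A restricted edge-cut of a connected graph $G$ is a set $S\subseteq E(G)$ such that $G-S$ is disconnected and every component of $G-S$ has at least $2$ vertices; $\lambda'(G)$ is the minimum cardinality of a restricted edge-cut. A graph $G$ is maximally restricted edge-connected if $\lambda'(G)=\xi(G)$. The strong product $G\boxtimes H$ has vertex set $V(G)\times V(H)$, with $(x_1,y_1)$ and $(x_2,y_2)$ adjacent iff either $x_1=x_2$ and $y_1y_2\in E(H)$, or $y_1=y_2$ and $x_1x_2\in E(G)$, or $x_1x_2\in E(G)$ and $y_1y_2\in E(H)$. (One has $\xi(G\boxtimes K_n)=2n\delta(G)+2n-4$.) *)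

theory Defs
  imports Main
begin

definition graph :: "'a set \<Rightarrow> 'a set set \<Rightarrow> bool" where
  "graph V E \<longleftrightarrow> finite V \<and> (\<forall>e\<in>E. \<exists>u v. u \<noteq> v \<and> u \<in> V \<and> v \<in> V \<and> e = {u, v})"

definition adj :: "'a set set \<Rightarrow> 'a \<Rightarrow> 'a \<Rightarrow> bool" where
  "adj E u v \<longleftrightarrow> {u, v} \<in> E"

definition reachable :: "'a set \<Rightarrow> 'a set set \<Rightarrow> 'a \<Rightarrow> 'a \<Rightarrow> bool" where
  "reachable V E u v \<longleftrightarrow> u \<in> V \<and> v \<in> V \<and> (\<lambda>x y. x \<in> V \<and> y \<in> V \<and> adj E x y)\<^sup>*\<^sup>* u v"

definition connected_graph :: "'a set \<Rightarrow> 'a set set \<Rightarrow> bool" where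
  "connected_graph V E \<longleftrightarrow> V \<noteq> {} \<and> (\<forall>u\<in>V. \<forall>v\<in>V. reachable V E u v)"

definition component :: "'a set \<Rightarrow> 'a set set \<Rightarrow> 'a \<Rightarrow> 'a set" where
  "component V E v = {w. reachable V E v w}"

definition degree :: "'a set set \<Rightarrow> 'a \<Rightarrow> nat" where
  "degree E v = card {e \<in> E. v \<in> e}"

definition min_degree :: "'a set \<Rightarrow> 'a set set \<Rightarrow> nat" where
  "min_degree V E = Min (degree E ` V)"

definition min_edge_degree :: "'a set set \<Rightarrow> nat" where
  "min_edge_degree E = Min {degree E u + degree E v - 2 | u v. {u, v} \<in> E \<and> u \<noteq> v}"

definition edge_cut :: "'a set \<Rightarrow> 'a set set \<Rightarrow> 'a set set \<Rightarrow> bool" where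
  "edge_cut V E S \<longleftrightarrow> S \<subseteq> E \<and> \<not> connected_graph V (E - S)"

definition edge_connectivity :: "'a set \<Rightarrow> 'a set set \<Rightarrow> nat" where
  "edge_connectivity V E = Min {card S | S. edge_cut V E S}"

definition restricted_edge_cut :: "'a set \<Rightarrow> 'a set set \<Rightarrow> 'a set set \<Rightarrow> bool" where
  "restricted_edge_cut V E S \<longleftrightarrow> S \<subseteq> E \<and> \<not> connected_graph V (E - S)
     \<and> (\<forall>v\<in>V. card (component V (E - S) v) \<ge> 2)"

definition restricted_edge_connectivity :: "'a set \<Rightarrow> 'a set set \<Rightarrow> nat" where
  "restricted_edge_connectivity V E = Min {card S | S. restricted_edge_cut V E S}"

definition max_restricted_edge_connected :: "'a set \<Rightarrow> 'a set set \<Rightarrow> bool" where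
  "max_restricted_edge_connected V E \<longleftrightarrow> (\<exists>S. restricted_edge_cut V E S)
     \<and> restricted_edge_connectivity V E = min_edge_degree E"

definition complete_edges :: "nat \<Rightarrow> nat set set" where
  "complete_edges n = {{i, j} | i j. i < n \<and> j < n \<and> i \<noteq> j}"

definition strong_product_edges ::
  "'a set \<Rightarrow> 'a set set \<Rightarrow> 'b set \<Rightarrow> 'b set set \<Rightarrow> ('a \<times> 'b) set set" where
  "strong_product_edges V1 E1 V2 E2 =
     {{(x1, y1), (x2, y2)} | x1 y1 x2 y2.
        x1 \<in> V1 \<and> x2 \<in> V1 \<and> y1 \<in> V2 \<and> y2 \<in> V2 \<and>
        ((x1 = x2 \<and> adj E2 y1 y2) \<or> (y1 = y2 \<and> adj E1 x1 x2) \<or> (adj E1 x1 x2 \<and> adj E2 y1 y2))}"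

end

(*
  Let H be the strong product of G with K_n.  A restricted edge-cut S of H separates a vertex
  set X with |X| >= 2 and |V(H) - X| >= 2, and S contains every edge of H leaving X.  If X
  meets the fibre {x} \<times> {0..<n} in a(x) vertices, the number of these edges is

    \<Sum>_x a(x) (n - a(x)) + \<Sum>_x \<Sum>_{y \<in> N(x)} a(x) (n - a(y)),

  which is concave in each a(x) separately.  Rounding the fractional fibres one at a time to
  0 or n therefore reduces the estimate to three situations: \<Sum> a <= n and, symmetrically,
  \<Sum> a >= n|V| - n, where a direct count gives at least 2n\<delta> + 2n - 4; and fibres that are
  all full or empty, where the count is n^2 times the size of an edge-cut of G and hence at
  least n^2 \<lambda>(G) >= 2n\<delta> + 2n - 4.  The edges adjacent to an edge joining two copies of a
  vertex of minimum degree form a restricted edge-cut of exactly this size, which is \<xi>(H).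
  Only the half n^2 \<lambda>(G) >= 2n\<delta> + 2n - 4 of the hypothesis is needed.
*)

theory Submission
  imports Defs
begin

section \<open>Graphs, neighbourhoods and boundaries\<close>

lemma graph_edgeD:
  assumes "graph V E" "{x, y} \<in> E"
  shows "x \<noteq> y" "x \<in> V" "y \<in> V"
  using assms unfolding graph_def by (auto simp: doubleton_eq_iff)

lemma graph_finite_edges: "graph V E \<Longrightarrow> finite E"
  unfolding graph_def by (rule finite_subset[of E "Pow V"]) auto

definition neighbors :: "'a set \<Rightarrow> 'a set set \<Rightarrow> 'a \<Rightarrow> 'a set" where
  "neighbors V E x = {y \<in> V. {x, y} \<in> E}"

definition boundary :: "'a set \<Rightarrow> 'a set set \<Rightarrow> 'a set \<Rightarrow> ('a \<times> 'a) set" where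
  "boundary V E X = (SIGMA x:X. neighbors V E x - X)"

lemma finite_neighbors: "finite V \<Longrightarrow> finite (neighbors V E x)"
  by (simp add: neighbors_def)

lemma finite_boundary: "finite X \<Longrightarrow> finite V \<Longrightarrow> finite (boundary V E X)"
  unfolding boundary_def neighbors_def by auto

lemma not_in_neighbors: "graph V E \<Longrightarrow> x \<notin> neighbors V E x"
  unfolding neighbors_def using graph_edgeD(1)[of V E x x] by auto

lemma degree_eq_card_neighbors:
  assumes "graph V E"
  shows "degree E x = card (neighbors V E x)"
proof -
  have "bij_betw (\<lambda>y. {x, y}) (neighbors V E x) {e \<in> E. x \<in> e}"
  proof (rule bij_betwI')
    fix y z assume "y \<in> neighbors V E x" "z \<in> neighbors V E x"
    then show "({x, y} = {x, z}) = (y = z)"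
      using not_in_neighbors[OF assms, of x] by (auto simp: doubleton_eq_iff)
  next
    fix e assume "e \<in> {e \<in> E. x \<in> e}"
    then show "\<exists>y\<in>neighbors V E x. e = {x, y}"
      using assms unfolding graph_def neighbors_def by (fastforce simp: insert_commute)
  qed (auto simp: neighbors_def)
  then show ?thesis
    unfolding degree_def by (simp add: bij_betw_same_card)
qed

lemma reachable_closed:
  assumes "reachable V E u w" "u \<in> X" "\<And>a b. a \<in> X \<Longrightarrow> b \<in> V \<Longrightarrow> {a, b} \<in> E \<Longrightarrow> b \<in> X"
  shows "w \<in> X"
proof -
  have "(\<lambda>x y. x \<in> V \<and> y \<in> V \<and> adj E x y)\<^sup>*\<^sup>* u w"
    using assms(1) by (simp add: reachable_def)
  then show ?thesis
    by (induction rule: rtranclp_induct) (use assms(2,3) in \<open>auto simp: adj_def\<close>)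
qed

lemma reachable_sym: "reachable V E u v \<Longrightarrow> reachable V E v u"
proof -
  have "symp (\<lambda>x y. x \<in> V \<and> y \<in> V \<and> adj E x y)"
    by (rule sympI) (auto simp: adj_def insert_commute)
  then show "reachable V E u v \<Longrightarrow> reachable V E v u"
    unfolding reachable_def by (metis sympD symp_rtranclp)
qed

lemma reachable_trans: "reachable V E u v \<Longrightarrow> reachable V E v w \<Longrightarrow> reachable V E u w"
  unfolding reachable_def by (meson rtranclp_trans)

lemma reachable_edge: "u \<in> V \<Longrightarrow> v \<in> V \<Longrightarrow> {u, v} \<in> E \<Longrightarrow> reachable V E u v"
  unfolding reachable_def adj_def by auto

lemma component_subset: "component V E v \<subseteq> V"
  by (auto simp: component_def reachable_def)

lemma two_le_card_component:
  assumes "finite V" "w \<in> V" "w' \<in> V" "w \<noteq> w'" "{w, w'} \<in> E"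
  shows "2 \<le> card (component V E w)"
proof -
  have "{w, w'} \<subseteq> component V E w"
    using reachable_edge[OF assms(2,3,5)] assms(2) by (auto simp: component_def reachable_def)
  moreover have "finite (component V E w)"
    using assms(1) component_subset finite_subset by metis
  ultimately have "card {w, w'} \<le> card (component V E w)"
    by (rule card_mono[rotated])
  with assms(4) show ?thesis by simp
qed

lemma edge_leaving_component:
  assumes "x \<in> component V E u" "y \<in> V" "{x, y} \<in> E"
  shows "y \<in> component V E u"
  using assms reachable_trans[of V E u x y] reachable_edge[of x V y E] component_subset[of V E u]
  by (auto simp: component_def)

lemma not_connected_graphI:
  assumes "u \<in> X" "X \<subseteq> V" "w \<in> V - X"
    and closed: "\<And>a b. a \<in> X \<Longrightarrow> b \<in> V \<Longrightarrow> {a, b} \<in> E \<Longrightarrow> b \<in> X"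
  shows "\<not> connected_graph V E"
proof
  assume "connected_graph V E"
  then have "reachable V E u w"
    using assms(1-3) unfolding connected_graph_def by blast
  then have "w \<in> X"
    using assms(1) closed by (rule reachable_closed)
  with assms(3) show False by simp
qed

lemma card_boundary_le:
  assumes "finite S" "\<And>x y. x \<in> X \<Longrightarrow> y \<in> neighbors V E x \<Longrightarrow> y \<notin> X \<Longrightarrow> {x, y} \<in> S"
  shows "card (boundary V E X) \<le> card S"
proof -
  let ?edge = "\<lambda>(x, y). {x, y}"
  have "?edge ` boundary V E X \<subseteq> S"
    using assms(2) by (auto simp: boundary_def)
  moreover have "inj_on ?edge (boundary V E X)"
    by (rule inj_onI) (auto simp: boundary_def doubleton_eq_iff)
  ultimately show ?thesis
    using assms(1) card_mono card_image by metis
qed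

lemma degree_pos_if_connected:
  assumes "graph V E" "connected_graph V E" "2 \<le> card V" "x \<in> V"
  shows "0 < degree E x"
proof -
  have "\<not> V \<subseteq> {x}"
  proof
    assume "V \<subseteq> {x}"
    then have "card V \<le> 1"
      using card_mono[of "{x}" V] by simp
    with assms(3) show False by simp
  qed
  then obtain y where "y \<in> V" "y \<noteq> x"
    by blast
  then have "(\<lambda>a b. a \<in> V \<and> b \<in> V \<and> adj E a b)\<^sup>*\<^sup>* x y"
    using assms(2,4) unfolding connected_graph_def reachable_def by blast
  then obtain z where "z \<in> V" "{x, z} \<in> E"
    using \<open>y \<noteq> x\<close> by (cases rule: converse_rtranclpE) (auto simp: adj_def)
  then have "neighbors V E x \<noteq> {}"
    by (auto simp: neighbors_def)
  then show ?thesis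
    using assms(1) by (simp add: degree_eq_card_neighbors finite_neighbors graph_def card_gt_0_iff)
qed

section \<open>Edge cuts\<close>

lemma restricted_edge_cut_separates:
  assumes "graph V E" "V \<noteq> {}" and cut: "restricted_edge_cut V E S"
  obtains X where "X \<subseteq> V" "2 \<le> card X" "2 \<le> card (V - X)" "card (boundary V E X) \<le> card S"
proof -
  have "S \<subseteq> E" and big: "\<And>w. w \<in> V \<Longrightarrow> 2 \<le> card (component V (E - S) w)"
    using cut unfolding restricted_edge_cut_def by auto
  obtain u v where uv: "u \<in> V" "v \<in> V" "\<not> reachable V (E - S) u v"
    using cut \<open>V \<noteq> {}\<close> unfolding restricted_edge_cut_def connected_graph_def by blast
  define X where "X = component V (E - S) u"
  have "component V (E - S) v \<subseteq> V - X"
  proof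
    fix w assume "w \<in> component V (E - S) v"
    then have vw: "reachable V (E - S) v w" by (simp add: component_def)
    then have "w \<in> V" by (simp add: reachable_def)
    moreover have "w \<notin> X"
      using uv(3) reachable_trans[OF _ reachable_sym[OF vw]] by (auto simp: X_def component_def)
    ultimately show "w \<in> V - X" by simp
  qed
  then have "2 \<le> card (V - X)"
    using big[OF uv(2)] card_mono[of "V - X" "component V (E - S) v"] assms(1)
    unfolding graph_def by simp
  moreover have "card (boundary V E X) \<le> card S"
  proof (rule card_boundary_le)
    show "finite S"
      using \<open>S \<subseteq> E\<close> graph_finite_edges[OF assms(1)] finite_subset by blast
    show "{x, y} \<in> S" if "x \<in> X" "y \<in> neighbors V E x" "y \<notin> X" for x y
      using that edge_leaving_component[of x V "E - S" u y] by (auto simp: X_def neighbors_def)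
  qed
  ultimately show ?thesis
    using that[of X] component_subset[of V "E - S" u] big[OF uv(1)] by (simp add: X_def)
qed

lemma edge_connectivity_le_card_boundary:
  assumes "graph V E" "A \<subseteq> V" "A \<noteq> {}" "A \<noteq> V"
  shows "edge_connectivity V E \<le> card (boundary V E A)"
proof -
  let ?D = "(\<lambda>(x, y). {x, y}) ` boundary V E A"
  have "edge_cut V E ?D"
    unfolding edge_cut_def
  proof
    show "?D \<subseteq> E"
      by (auto simp: boundary_def neighbors_def)
    obtain x y where "x \<in> A" "y \<in> V - A"
      using assms(2-4) by blast
    show "\<not> connected_graph V (E - ?D)"
      by (rule not_connected_graphI[OF \<open>x \<in> A\<close> assms(2) \<open>y \<in> V - A\<close>])
        (auto simp: boundary_def neighbors_def)
  qed
  moreover have "finite {card S |S. edge_cut V E S}"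
    using graph_finite_edges[OF assms(1)]
    by (auto intro: finite_subset[of _ "card ` Pow E"] simp: edge_cut_def)
  ultimately have "edge_connectivity V E \<le> card ?D"
    unfolding edge_connectivity_def by (auto intro: Min_le)
  also have "\<dots> \<le> card (boundary V E A)"
    using assms(1,2) by (intro card_image_le finite_boundary) (auto simp: graph_def finite_subset)
  finally show ?thesis .
qed

definition adjacent_edges :: "'a set set \<Rightarrow> 'a \<Rightarrow> 'a \<Rightarrow> 'a set set" where
  "adjacent_edges E u v = {e \<in> E. (u \<in> e \<or> v \<in> e) \<and> e \<noteq> {u, v}}"

lemma card_adjacent_edges:
  assumes "graph V E" "{u, v} \<in> E"
  shows "card (adjacent_edges E u v) = degree E u + degree E v - 2"
proof -
  let ?Eu = "{e \<in> E. u \<in> e}" and ?Ev = "{e \<in> E. v \<in> e}"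
  have fin: "finite ?Eu" "finite ?Ev"
    using graph_finite_edges[OF assms(1)] by auto
  have "?Eu \<inter> ?Ev = {{u, v}}"
    using assms graph_edgeD(1)[OF assms] unfolding graph_def by auto
  then have "card (?Eu \<union> ?Ev) + 1 = degree E u + degree E v"
    using card_Un_Int[OF fin] unfolding degree_def by simp
  moreover have "adjacent_edges E u v = (?Eu \<union> ?Ev) - {{u, v}}"
    by (auto simp: adjacent_edges_def)
  ultimately show ?thesis
    using assms(2) fin by (simp add: card_Diff_singleton)
qed

lemma restricted_edge_cut_adjacent_edges:
  assumes "graph V E" "{u, v} \<in> E" "w\<^sub>0 \<in> V - {u, v}"
    and escape: "\<And>w. w \<in> V - {u, v} \<Longrightarrow> \<exists>w'\<in>V - {u, v}. {w, w'} \<in> E"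
  shows "restricted_edge_cut V E (adjacent_edges E u v)"
proof -
  let ?S = "adjacent_edges E u v"
  have uv: "u \<noteq> v" "u \<in> V" "v \<in> V"
    using graph_edgeD[OF assms(1,2)] by auto
  have "\<not> connected_graph V (E - ?S)"
    using uv assms(3)
    by (intro not_connected_graphI[of u "{u, v}"]) (auto simp: adjacent_edges_def doubleton_eq_iff)
  moreover have "2 \<le> card (component V (E - ?S) w)" if "w \<in> V" for w
  proof -
    obtain w' where "w' \<in> V" "w \<noteq> w'" "{w, w'} \<in> E - ?S"
    proof (cases "w \<in> {u, v}")
      case True
      have "{u, v} \<notin> ?S" by (simp add: adjacent_edges_def)
      with True show ?thesis
        using that[of v] that[of u] uv assms(2) by (auto simp: insert_commute)
    next
      case False
      then obtain w' where "w' \<in> V - {u, v}" "{w, w'} \<in> E"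
        using escape \<open>w \<in> V\<close> by blast
      with False show ?thesis
        using that graph_edgeD(1)[OF assms(1)] by (auto simp: adjacent_edges_def)
    qed
    with \<open>w \<in> V\<close> assms(1) show ?thesis
      by (intro two_le_card_component) (auto simp: graph_def)
  qed
  moreover have "?S \<subseteq> E" by (auto simp: adjacent_edges_def)
  ultimately show ?thesis
    unfolding restricted_edge_cut_def by blast
qed

lemma min_edge_degree_eqI:
  assumes "graph V E" "{u, v} \<in> E"
    and "\<And>a b. {a, b} \<in> E \<Longrightarrow> degree E u + degree E v \<le> degree E a + degree E b"
  shows "min_edge_degree E = degree E u + degree E v - 2"
  unfolding min_edge_degree_def
proof (rule Min_eqI)
  have "{degree E a + degree E b - 2 |a b. {a, b} \<in> E \<and> a \<noteq> b}
      \<subseteq> (\<lambda>(a, b). degree E a + degree E b - 2) ` (V \<times> V)"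
    using graph_edgeD[OF assms(1)] by fastforce
  then show "finite {degree E a + degree E b - 2 |a b. {a, b} \<in> E \<and> a \<noteq> b}"
    using assms(1) unfolding graph_def by (meson finite_SigmaI finite_imageI finite_subset)
qed (use assms graph_edgeD(1)[OF assms(1,2)] in \<open>fastforce+\<close>)

lemma max_restricted_edge_connectedI:
  assumes "graph V E" "restricted_edge_cut V E S\<^sub>0" "card S\<^sub>0 = min_edge_degree E"
    and "\<And>S. restricted_edge_cut V E S \<Longrightarrow> card S\<^sub>0 \<le> card S"
  shows "max_restricted_edge_connected V E"
proof -
  have "finite {card S |S. restricted_edge_cut V E S}"
    using graph_finite_edges[OF assms(1)]
    by (auto intro: finite_subset[of _ "card ` Pow E"] simp: restricted_edge_cut_def)
  then have "restricted_edge_connectivity V E = card S\<^sub>0"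
    unfolding restricted_edge_connectivity_def using assms(2,4) by (intro Min_eqI) auto
  then show ?thesis
    unfolding max_restricted_edge_connected_def using assms(2,3) by auto
qed

section \<open>Strong products\<close>

lemma strong_product_edge_iff:
  assumes "graph V\<^sub>1 E\<^sub>1" "graph V\<^sub>2 E\<^sub>2" "x \<in> V\<^sub>1" "x' \<in> V\<^sub>1" "y \<in> V\<^sub>2" "y' \<in> V\<^sub>2"
  shows "{(x, y), (x', y')} \<in> strong_product_edges V\<^sub>1 E\<^sub>1 V\<^sub>2 E\<^sub>2 \<longleftrightarrow>
         (x, y) \<noteq> (x', y') \<and> (x = x' \<or> {x, x'} \<in> E\<^sub>1) \<and> (y = y' \<or> {y, y'} \<in> E\<^sub>2)"
proof -
  have irrefl: "{a, a} \<notin> E\<^sub>1" "{b, b} \<notin> E\<^sub>2" for a b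
    using graph_edgeD(1)[OF assms(1)] graph_edgeD(1)[OF assms(2)] by blast+
  have "{(x, y), (x', y')} \<in> strong_product_edges V\<^sub>1 E\<^sub>1 V\<^sub>2 E\<^sub>2 \<longleftrightarrow>
      (x = x' \<and> {y, y'} \<in> E\<^sub>2) \<or> (y = y' \<and> {x, x'} \<in> E\<^sub>1) \<or> ({x, x'} \<in> E\<^sub>1 \<and> {y, y'} \<in> E\<^sub>2)"
    using assms(3-6) unfolding strong_product_edges_def adj_def
    by (auto simp: doubleton_eq_iff insert_commute)
  then show ?thesis
    using irrefl by auto
qed

lemma graph_strong_product:
  assumes "graph V\<^sub>1 E\<^sub>1" "graph V\<^sub>2 E\<^sub>2"
  shows "graph (V\<^sub>1 \<times> V\<^sub>2) (strong_product_edges V\<^sub>1 E\<^sub>1 V\<^sub>2 E\<^sub>2)"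
proof -
  have "\<exists>p q. p \<noteq> q \<and> p \<in> V\<^sub>1 \<times> V\<^sub>2 \<and> q \<in> V\<^sub>1 \<times> V\<^sub>2 \<and> e = {p, q}"
    if e: "e \<in> strong_product_edges V\<^sub>1 E\<^sub>1 V\<^sub>2 E\<^sub>2" for e
  proof -
    obtain x y x' y' where "e = {(x, y), (x', y')}" "x \<in> V\<^sub>1" "x' \<in> V\<^sub>1" "y \<in> V\<^sub>2" "y' \<in> V\<^sub>2"
      using e unfolding strong_product_edges_def by fastforce
    with e show ?thesis
      using strong_product_edge_iff[OF assms] by blast
  qed
  then show ?thesis
    using assms unfolding graph_def by auto
qed

lemma neighbors_strong_product:
  assumes "graph V\<^sub>1 E\<^sub>1" "graph V\<^sub>2 E\<^sub>2" "x \<in> V\<^sub>1" "y \<in> V\<^sub>2"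
  shows "neighbors (V\<^sub>1 \<times> V\<^sub>2) (strong_product_edges V\<^sub>1 E\<^sub>1 V\<^sub>2 E\<^sub>2) (x, y)
       = insert x (neighbors V\<^sub>1 E\<^sub>1 x) \<times> insert y (neighbors V\<^sub>2 E\<^sub>2 y) - {(x, y)}"
  using strong_product_edge_iff[OF assms(1,2)] assms(3,4)
  by (auto simp: neighbors_def)

lemma degree_strong_product:
  assumes "graph V\<^sub>1 E\<^sub>1" "graph V\<^sub>2 E\<^sub>2" "x \<in> V\<^sub>1" "y \<in> V\<^sub>2"
  shows "degree (strong_product_edges V\<^sub>1 E\<^sub>1 V\<^sub>2 E\<^sub>2) (x, y)
       = Suc (degree E\<^sub>1 x) * Suc (degree E\<^sub>2 y) - 1"
proof -
  let ?N\<^sub>1 = "insert x (neighbors V\<^sub>1 E\<^sub>1 x)" and ?N\<^sub>2 = "insert y (neighbors V\<^sub>2 E\<^sub>2 y)"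
  have "finite ?N\<^sub>1" "finite ?N\<^sub>2"
    using assms(1,2) by (simp_all add: finite_neighbors graph_def)
  then have "card (?N\<^sub>1 \<times> ?N\<^sub>2 - {(x, y)}) = card ?N\<^sub>1 * card ?N\<^sub>2 - 1"
    by (subst card_Diff_singleton) (simp_all only: card_cartesian_product finite_cartesian_product
        mem_Times_iff fst_conv snd_conv insertI1 conj_absorb)
  also have "\<dots> = Suc (degree E\<^sub>1 x) * Suc (degree E\<^sub>2 y) - 1"
    using \<open>finite ?N\<^sub>1\<close> \<open>finite ?N\<^sub>2\<close> not_in_neighbors[OF assms(1)] not_in_neighbors[OF assms(2)]
    by (simp add: degree_eq_card_neighbors[OF assms(1)] degree_eq_card_neighbors[OF assms(2)])
  finally show ?thesis
    using assms by (simp add: degree_eq_card_neighbors[OF graph_strong_product[OF assms(1,2)]]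
        neighbors_strong_product)
qed

lemma complete_edge_iff [simp]: "{i, j} \<in> complete_edges n \<longleftrightarrow> i < n \<and> j < n \<and> i \<noteq> j"
  unfolding complete_edges_def by (auto simp: doubleton_eq_iff)

lemma graph_complete: "graph {0..<n} (complete_edges n)"
  unfolding graph_def complete_edges_def by auto

lemma neighbors_complete: "i < n \<Longrightarrow> neighbors {0..<n} (complete_edges n) i = {0..<n} - {i}"
  unfolding neighbors_def complete_edges_def by (force simp: doubleton_eq_iff)

lemma degree_complete: "i < n \<Longrightarrow> degree (complete_edges n) i = n - 1"
  by (simp add: degree_eq_card_neighbors[OF graph_complete] neighbors_complete)

lemma degree_strong_product_complete:
  assumes "graph V E" "x \<in> V" "i < n"
  shows "degree (strong_product_edges V E {0..<n} (complete_edges n)) (x, i) = Suc (degree E x) * n - 1"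
  using assms by (simp add: degree_strong_product[OF assms(1) graph_complete] degree_complete)

lemma restricted_edge_cut_strong_product_complete:
  assumes "graph V E" "x \<in> V" "4 \<le> n"
  shows "restricted_edge_cut (V \<times> {0..<n}) (strong_product_edges V E {0..<n} (complete_edges n))
           (adjacent_edges (strong_product_edges V E {0..<n} (complete_edges n)) (x, 0) (x, 1))"
proof (rule restricted_edge_cut_adjacent_edges[where w\<^sub>0 = "(x, 2)"])
  note edge_iff = strong_product_edge_iff[OF assms(1) graph_complete]
  show "graph (V \<times> {0..<n}) (strong_product_edges V E {0..<n} (complete_edges n))"
    using assms(1) by (rule graph_strong_product[OF _ graph_complete])
  show "{(x, 0), (x, 1)} \<in> strong_product_edges V E {0..<n} (complete_edges n)"
    using assms edge_iff by simp
  show "(x, 2) \<in> V \<times> {0..<n} - {(x, 0), (x, 1)}"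
    using assms by simp
  fix w assume "w \<in> V \<times> {0..<n} - {(x, 0), (x, 1)}"
  then obtain y i where "w = (y, i)" "y \<in> V" "i < n"
    by auto
  then show "\<exists>w'\<in>V \<times> {0..<n} - {(x, 0), (x, 1)}. {w, w'} \<in> strong_product_edges V E {0..<n} (complete_edges n)"
    using assms(3) edge_iff by (intro bexI[of _ "(y, if i = 2 then 3 else 2)"]) auto
qed

section \<open>Edges leaving a vertex set of a product with a complete graph\<close>

text \<open>If \<open>X \<subseteq> V \<times> {0..<n}\<close> has \<open>a x\<close> elements over \<open>x\<close>, then \<open>boundary_weight V E n a\<close> is the
  number of edges of the strong product with \<open>K\<^sub>n\<close> that leave \<open>X\<close>
  (lemma \<open>card_boundary_strong_product_complete\<close>).\<close>

definition boundary_weight :: "'a set \<Rightarrow> 'a set set \<Rightarrow> nat \<Rightarrow> ('a \<Rightarrow> int) \<Rightarrow> int" where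
  "boundary_weight V E n a =
     (\<Sum>x\<in>V. a x * (int n - a x) + (\<Sum>y\<in>neighbors V E x. a x * (int n - a y)))"

lemma boundary_weight_concave:
  assumes "0 \<le> a z" "a z \<le> int n"
  shows "(int n - a z) * boundary_weight V E n (a(z := 0)) + a z * boundary_weight V E n (a(z := int n))
         \<le> int n * boundary_weight V E n a"
proof -
  let ?t = "a z" and ?a\<^sub>0 = "a(z := 0)" and ?a\<^sub>1 = "a(z := int n)"
  have pair: "(int n - ?t) * (?a\<^sub>0 x * (int n - ?a\<^sub>0 y)) + ?t * (?a\<^sub>1 x * (int n - ?a\<^sub>1 y))
      \<le> int n * (a x * (int n - a y))" for x y
  proof (cases "x = z \<and> y = z")
    case True
    then show ?thesis using assms by (simp add: mult_nonneg_nonneg)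
  next
    case False
    then show ?thesis by (cases "x = z") (simp_all add: algebra_simps)
  qed
  have vertex: "(int n - ?t) * (?a\<^sub>0 x * (int n - ?a\<^sub>0 x) + (\<Sum>y\<in>neighbors V E x. ?a\<^sub>0 x * (int n - ?a\<^sub>0 y)))
      + ?t * (?a\<^sub>1 x * (int n - ?a\<^sub>1 x) + (\<Sum>y\<in>neighbors V E x. ?a\<^sub>1 x * (int n - ?a\<^sub>1 y)))
      \<le> int n * (a x * (int n - a x) + (\<Sum>y\<in>neighbors V E x. a x * (int n - a y)))" for x
  proof -
    have "(int n - ?t) * (\<Sum>y\<in>neighbors V E x. ?a\<^sub>0 x * (int n - ?a\<^sub>0 y))
        + ?t * (\<Sum>y\<in>neighbors V E x. ?a\<^sub>1 x * (int n - ?a\<^sub>1 y))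
      \<le> int n * (\<Sum>y\<in>neighbors V E x. a x * (int n - a y))"
      unfolding sum_distrib_left sum.distrib[symmetric] by (rule sum_mono) (rule pair)
    with pair[of x x] show ?thesis by (simp add: distrib_left)
  qed
  show ?thesis
    unfolding boundary_weight_def sum_distrib_left sum.distrib[symmetric] by (rule sum_mono) (rule vertex)
qed

lemma boundary_weight_complement:
  assumes "finite V"
  shows "boundary_weight V E n (\<lambda>x. int n - a x) = boundary_weight V E n a"
proof -
  have "(\<Sum>x\<in>V. \<Sum>y\<in>neighbors V E x. (int n - a x) * a y)
      = (\<Sum>y\<in>V. \<Sum>x\<in>{x. x \<in> V \<and> {x, y} \<in> E}. (int n - a x) * a y)"
    unfolding neighbors_def by (rule sum.swap_restrict) (use assms in auto)
  also have "\<dots> = (\<Sum>x\<in>V. \<Sum>y\<in>neighbors V E x. a x * (int n - a y))"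
    by (simp add: neighbors_def insert_commute mult.commute)
  finally show ?thesis
    unfolding boundary_weight_def sum.distrib by (simp add: mult.commute)
qed

lemma sum_complement_closed_neighborhood_ge:
  assumes "graph V E" "x \<in> V" "\<delta> \<le> degree E x" "\<forall>y\<in>V. 0 \<le> a y"
  shows "int n + int n * int \<delta> - sum a V \<le> (int n - a x) + (\<Sum>y\<in>neighbors V E x. int n - a y)"
proof -
  have fin: "finite V" using assms(1) by (simp add: graph_def)
  have "a x + sum a (neighbors V E x) = sum a (insert x (neighbors V E x))"
    using not_in_neighbors[OF assms(1)] finite_neighbors[OF fin] by simp
  also have "\<dots> \<le> sum a V"
    using assms(2,4) by (intro sum_mono2[OF fin]) (auto simp: neighbors_def)
  finally have "a x + sum a (neighbors V E x) \<le> sum a V" .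
  moreover have "int \<delta> \<le> int (card (neighbors V E x))"
    using assms(3) degree_eq_card_neighbors[OF assms(1)] by simp
  then have "int n * int \<delta> \<le> int n * int (card (neighbors V E x))"
    by (simp add: mult_left_mono)
  moreover have "(\<Sum>y\<in>neighbors V E x. int n - a y)
      = int n * int (card (neighbors V E x)) - sum a (neighbors V E x)"
    by (simp add: sum_subtractf)
  ultimately show ?thesis by linarith
qed

lemma boundary_weight_small:
  assumes "graph V E" "\<And>x. x \<in> V \<Longrightarrow> \<delta> \<le> degree E x" "1 \<le> \<delta>"
    and nonneg: "\<forall>x\<in>V. 0 \<le> a x" and "2 \<le> sum a V" "sum a V \<le> int n"
  shows "2 * int n * int \<delta> + 2 * int n - 4 \<le> boundary_weight V E n a"
proof -
  define k where "k = sum a V"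
  have "k * (int n + int n * int \<delta> - k) = (\<Sum>x\<in>V. a x * (int n + int n * int \<delta> - k))"
    unfolding k_def by (simp add: sum_distrib_right)
  also have "\<dots> \<le> boundary_weight V E n a"
    unfolding boundary_weight_def
  proof (rule sum_mono)
    fix x assume "x \<in> V"
    then have "a x * (int n + int n * int \<delta> - k)
        \<le> a x * ((int n - a x) + (\<Sum>y\<in>neighbors V E x. int n - a y))"
      using sum_complement_closed_neighborhood_ge[OF assms(1) _ assms(2) nonneg, of x n] nonneg
      unfolding k_def by (intro mult_left_mono) auto
    then show "a x * (int n + int n * int \<delta> - k)
        \<le> a x * (int n - a x) + (\<Sum>y\<in>neighbors V E x. a x * (int n - a y))"
      by (simp add: distrib_left sum_distrib_left)
  qed
  finally have "k * (int n + int n * int \<delta> - k) \<le> boundary_weight V E n a" .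
  moreover have "int n \<le> int n * int \<delta>"
    using assms(3) by (simp add: mult_le_cancel_left1)
  then have "0 \<le> (k - 2) * (int n + int n * int \<delta> - k - 2)"
    using assms(5,6) unfolding k_def by (intro mult_nonneg_nonneg) linarith+
  ultimately show ?thesis by (simp add: algebra_simps)
qed

lemma boundary_weight_large:
  assumes "graph V E" "\<And>x. x \<in> V \<Longrightarrow> \<delta> \<le> degree E x" "1 \<le> \<delta>"
    and "\<forall>x\<in>V. 0 \<le> a x \<and> a x \<le> int n"
    and "int n * int (card V) - int n \<le> sum a V" "sum a V + 2 \<le> int n * int (card V)"
  shows "2 * int n * int \<delta> + 2 * int n - 4 \<le> boundary_weight V E n a"
proof -
  have "sum (\<lambda>x. int n - a x) V = int n * int (card V) - sum a V"
    by (simp add: sum_subtractf)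
  then have "2 * int n * int \<delta> + 2 * int n - 4 \<le> boundary_weight V E n (\<lambda>x. int n - a x)"
    using assms by (intro boundary_weight_small) auto
  then show ?thesis
    using assms(1) by (simp add: boundary_weight_complement graph_def)
qed

lemma boundary_weight_binary:
  assumes "finite V" and binary: "\<forall>x\<in>V. a x = 0 \<or> a x = int n"
  shows "boundary_weight V E n a = int n * int n * int (card (boundary V E {x \<in> V. a x = int n}))"
proof -
  let ?A = "{x \<in> V. a x = int n}"
  have vertex: "a x * (int n - a x) + (\<Sum>y\<in>neighbors V E x. a x * (int n - a y))
      = (if x \<in> ?A then int n * int n * int (card (neighbors V E x - ?A)) else 0)"
    if "x \<in> V" for x
  proof (cases "a x = int n")
    case True
    have "(\<Sum>y\<in>neighbors V E x. a x * (int n - a y)) = (\<Sum>y\<in>neighbors V E x - ?A. int n * int n)"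
      using binary True assms(1) by (intro sum.mono_neutral_cong_right) (auto simp: neighbors_def)
    with True that show ?thesis by simp
  next
    case False
    with binary that show ?thesis by auto
  qed
  have "boundary_weight V E n a = (\<Sum>x\<in>?A. int n * int n * int (card (neighbors V E x - ?A)))"
    unfolding boundary_weight_def using assms(1) by (simp add: vertex sum.If_cases Int_def cong: sum.cong)
  also have "\<dots> = int n * int n * int (card (boundary V E ?A))"
    using assms(1) by (simp add: boundary_def sum_distrib_left finite_neighbors card_SigmaI)
  finally show ?thesis .
qed

lemma boundary_weight_binary_ge:
  assumes "graph V E" and binary: "\<forall>x\<in>V. a x = 0 \<or> a x = int n"
    and "2 \<le> sum a V" "sum a V + 2 \<le> int n * int (card V)"
  shows "int n * int n * int (edge_connectivity V E) \<le> boundary_weight V E n a"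
proof -
  let ?A = "{x \<in> V. a x = int n}"
  have "?A \<noteq> {}"
  proof
    assume "?A = {}"
    with binary have "sum a V = 0" by simp
    with assms(3) show False by simp
  qed
  moreover have "?A \<noteq> V"
  proof
    assume "?A = V"
    then have "\<forall>x\<in>V. a x = int n" by blast
    then have "sum a V = int n * int (card V)" by simp
    with assms(4) show False by simp
  qed
  ultimately have "edge_connectivity V E \<le> card (boundary V E ?A)"
    by (intro edge_connectivity_le_card_boundary[OF assms(1)]) auto
  then show ?thesis
    using assms(1) binary by (simp add: boundary_weight_binary graph_def mult_left_mono)
qed

lemma boundary_weight_round:
  assumes "0 < n" "0 \<le> a z" "a z \<le> int n"
    and "c \<le> boundary_weight V E n (a(z := 0))" "c \<le> boundary_weight V E n (a(z := int n))"
  shows "c \<le> boundary_weight V E n a"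
proof -
  have "int n * c = (int n - a z) * c + a z * c"
    by (simp add: algebra_simps)
  also have "\<dots> \<le> (int n - a z) * boundary_weight V E n (a(z := 0))
                   + a z * boundary_weight V E n (a(z := int n))"
    using assms by (intro add_mono mult_left_mono) auto
  also have "\<dots> \<le> int n * boundary_weight V E n a"
    using assms(2,3) by (rule boundary_weight_concave)
  finally show ?thesis
    using assms(1) by simp
qed

lemma sum_fun_upd:
  fixes a :: "'a \<Rightarrow> 'b::ab_group_add"
  assumes "finite V" "z \<in> V"
  shows "sum (a(z := t)) V = sum a V - a z + t"
proof -
  have "sum (a(z := t)) (V - {z}) = sum a (V - {z})"
    by (rule sum.cong) auto
  with assms show ?thesis
    by (simp add: sum.remove[of V z])
qed

lemma boundary_weight_lower_bound:
  assumes "graph V E" "2 \<le> n" and degree: "\<And>x. x \<in> V \<Longrightarrow> \<delta> \<le> degree E x" "1 \<le> \<delta>"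
    and lambda: "2 * int n * int \<delta> + 2 * int n - 4 \<le> int n * int n * int (edge_connectivity V E)"
  shows "\<forall>x\<in>V. 0 \<le> a x \<and> a x \<le> int n \<Longrightarrow> 2 \<le> sum a V \<Longrightarrow> sum a V + 2 \<le> int n * int (card V)
    \<Longrightarrow> 2 * int n * int \<delta> + 2 * int n - 4 \<le> boundary_weight V E n a"
proof (induction "card {x \<in> V. 0 < a x \<and> a x < int n}" arbitrary: a rule: less_induct)
  case less
  have fin: "finite V" using assms(1) by (simp add: graph_def)
  consider "sum a V \<le> int n" | "int n * int (card V) - int n \<le> sum a V"
    | z where "z \<in> V" "0 < a z" "a z < int n" "int n < sum a V" "sum a V < int n * int (card V) - int n"
    | "\<forall>x\<in>V. a x = 0 \<or> a x = int n"
  proof (cases "\<exists>z\<in>V. 0 < a z \<and> a z < int n")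
    case True
    with that(1-3) show ?thesis by (meson not_le)
  next
    case False
    with that(4) less.prems(1) show ?thesis by force
  qed
  then show ?case
  proof cases
    case 1
    with less.prems show ?thesis
      using assms(1) degree by (intro boundary_weight_small) auto
  next
    case 2
    with less.prems show ?thesis
      using assms(1) degree by (intro boundary_weight_large) auto
  next
    case (3 z)
    have fewer: "card {x \<in> V. 0 < (a(z := t)) x \<and> (a(z := t)) x < int n}
        < card {x \<in> V. 0 < a x \<and> a x < int n}" if "t = 0 \<or> t = int n" for t
      using fin 3(1-3) that by (intro psubset_card_mono) auto
    have rounded: "2 * int n * int \<delta> + 2 * int n - 4 \<le> boundary_weight V E n (a(z := t))"
      if t: "t = 0 \<or> t = int n" for t
    proof (rule less.hyps[OF fewer[OF t]])
      show "\<forall>x\<in>V. 0 \<le> (a(z := t)) x \<and> (a(z := t)) x \<le> int n"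
        using less.prems(1) t by auto
      show "2 \<le> sum (a(z := t)) V" "sum (a(z := t)) V + 2 \<le> int n * int (card V)"
        using sum_fun_upd[OF fin \<open>z \<in> V\<close>, of a t] 3(2-5) t assms(2) by auto
    qed
    show ?thesis
      by (rule boundary_weight_round[where z = z])
        (use 3(2,3) assms(2) rounded[of 0] rounded[of "int n"] in simp_all)
  next
    case 4
    with less.prems lambda show ?thesis
      using boundary_weight_binary_ge[OF assms(1)] by fastforce
  qed
qed

lemma sum_fibres:
  assumes "finite V" "finite B" "X \<subseteq> V \<times> B"
  shows "(\<Sum>w\<in>X. f w) = (\<Sum>x\<in>V. \<Sum>i\<in>{i. (x, i) \<in> X}. f (x, i))"
proof -
  have "(\<Sum>w\<in>X. f w) = (\<Sum>(x, i)\<in>(SIGMA x:V. {i. (x, i) \<in> X}). f (x, i))"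
    using assms(3) by (intro sum.cong) auto
  also have "\<dots> = (\<Sum>x\<in>V. \<Sum>i\<in>{i. (x, i) \<in> X}. f (x, i))"
    using assms finite_subset[of "{i. (_, i) \<in> X}" B] by (subst sum.Sigma) auto
  finally show ?thesis .
qed

lemma card_fibre_le: "X \<subseteq> V \<times> {0..<n} \<Longrightarrow> card {i. (x, i) \<in> X} \<le> n"
  using card_mono[of "{0..<n}" "{i. (x, i) \<in> X}"] by auto

lemma card_boundary_strong_product_complete:
  assumes "graph V E" "X \<subseteq> V \<times> {0..<n}"
  defines "a \<equiv> \<lambda>x. int (card {i. (x, i) \<in> X})"
  shows "int (card (boundary (V \<times> {0..<n}) (strong_product_edges V E {0..<n} (complete_edges n)) X))
       = boundary_weight V E n a"
proof -
  let ?W = "V \<times> {0..<n}" and ?F = "strong_product_edges V E {0..<n} (complete_edges n)"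
  have fin: "finite V"
    using assms(1) by (simp add: graph_def)
  have card_outside: "int (card {j. j < n \<and> (y, j) \<notin> X}) = int n - a y" for y
  proof -
    have "{j. j < n \<and> (y, j) \<notin> X} = {0..<n} - {j. (y, j) \<in> X}"
      by auto
    moreover have "{j. (y, j) \<in> X} \<subseteq> {0..<n}"
      using assms(2) by auto
    ultimately show ?thesis
      using card_fibre_le[OF assms(2)]
      unfolding a_def by (simp add: card_Diff_subset finite_subset of_nat_diff)
  qed
  have outside: "int (card (neighbors ?W ?F (x, i) - X))
      = (int n - a x) + (\<Sum>y\<in>neighbors V E x. int n - a y)" if "(x, i) \<in> X" for x i
  proof -
    have "x \<in> V" "i < n"
      using that assms(2) by auto
    then have "neighbors ?W ?F (x, i) - X
        = (SIGMA y:insert x (neighbors V E x). {j \<in> {0..<n}. (y, j) \<notin> X})"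
      using that by (auto simp: neighbors_strong_product[OF assms(1) graph_complete] neighbors_complete)
    then show ?thesis
      using fin not_in_neighbors[OF assms(1)] by (simp add: finite_neighbors card_outside)
  qed
  have "int (card (boundary ?W ?F X)) = (\<Sum>w\<in>X. int (card (neighbors ?W ?F w - X)))"
    using fin finite_subset[OF assms(2)] by (simp add: boundary_def finite_neighbors card_SigmaI)
  also have "\<dots> = (\<Sum>x\<in>V. \<Sum>i\<in>{i. (x, i) \<in> X}. int (card (neighbors ?W ?F (x, i) - X)))"
    by (rule sum_fibres[OF fin _ assms(2)]) simp
  also have "\<dots> = boundary_weight V E n a"
    unfolding boundary_weight_def
    by (intro sum.cong refl) (simp add: outside a_def distrib_left sum_distrib_left)
  finally show ?thesis .
qed

lemma restricted_edge_cut_strong_product_complete_card_ge: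
  assumes "graph V E" "V \<noteq> {}" "2 \<le> n" "\<And>x. x \<in> V \<Longrightarrow> \<delta> \<le> degree E x" "1 \<le> \<delta>"
    and lambda: "2 * n * \<delta> + 2 * n - 4 \<le> n\<^sup>2 * edge_connectivity V E"
    and cut: "restricted_edge_cut (V \<times> {0..<n}) (strong_product_edges V E {0..<n} (complete_edges n)) S"
  shows "2 * n * \<delta> + 2 * n - 4 \<le> card S"
proof -
  let ?W = "V \<times> {0..<n}" and ?F = "strong_product_edges V E {0..<n} (complete_edges n)"
  have xi: "int (2 * n * \<delta> + 2 * n - 4) = 2 * int n * int \<delta> + 2 * int n - 4"
    using assms(3) by (simp add: of_nat_diff)
  have fin: "finite V"
    using assms(1) by (simp add: graph_def)
  obtain X where X: "X \<subseteq> ?W" "2 \<le> card X" "2 \<le> card (?W - X)" "card (boundary ?W ?F X) \<le> card S"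
    using restricted_edge_cut_separates[OF graph_strong_product[OF assms(1) graph_complete] _ cut]
      assms(2,3) by auto
  define a where "a x = int (card {i. (x, i) \<in> X})" for x
  have "card X = (\<Sum>x\<in>V. card {i. (x, i) \<in> X})"
    using sum_fibres[OF fin _ X(1), of "\<lambda>_. 1::nat"] by simp
  then have sum_a: "sum a V = int (card X)"
    unfolding a_def by simp
  have "card (?W - X) = card V * n - card X"
    using X(1) fin by (simp add: card_Diff_subset finite_subset card_cartesian_product)
  with X(3) have "int (card X) + 2 \<le> int n * int (card V)"
    by (simp add: algebra_simps flip: of_nat_mult of_nat_add)
  moreover have "2 * int n * int \<delta> + 2 * int n - 4 \<le> int n * int n * int (edge_connectivity V E)"
    using lambda[folded of_nat_le_iff[where 'a = int]] xi by (simp add: power2_eq_square)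
  ultimately have "2 * int n * int \<delta> + 2 * int n - 4 \<le> boundary_weight V E n a"
    using X(2) card_fibre_le[OF X(1)] sum_a unfolding a_def
    by (intro boundary_weight_lower_bound[OF assms(1,3,4,5)]) auto
  also have "\<dots> \<le> int (card S)"
    using X(4) card_boundary_strong_product_complete[OF assms(1) X(1)] unfolding a_def by simp
  finally show ?thesis
    using xi by linarith
qed

theorem corollary3p8:
  fixes V :: "'a set" and E :: "'a set set" and n :: nat
  assumes "graph V E"
    and "connected_graph V E"
    and "card V \<ge> 2"
    and "n \<ge> 4"
    and "min (n^2 * edge_connectivity V E) ((n - 1) * (card V + 2 * card E))
           \<ge> 2 * n * min_degree V E + 2 * n - 4"
  shows "max_restricted_edge_connected (V \<times> {0..<n})
           (strong_product_edges V E {0..<n} (complete_edges n))"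
proof -
  let ?F = "strong_product_edges V E {0..<n} (complete_edges n)"
  define \<delta> where "\<delta> = min_degree V E"
  have "finite V" "V \<noteq> {}"
    using assms(1,3) by (auto simp: graph_def)
  then have "\<delta> \<in> degree E ` V"
    unfolding \<delta>_def min_degree_def by (intro Min_in) auto
  then obtain x where x: "x \<in> V" "degree E x = \<delta>"
    by blast
  have degree_ge: "\<delta> \<le> degree E y" if "y \<in> V" for y
    using \<open>finite V\<close> that unfolding \<delta>_def min_degree_def by simp
  have "1 \<le> \<delta>"
    using degree_pos_if_connected[OF assms(1-3) x(1)] x(2) by simp
  have graph_F: "graph (V \<times> {0..<n}) ?F" and edge: "{(x, 0), (x, 1)} \<in> ?F"
    using assms(1,4) x(1) graph_strong_product[OF _ graph_complete]
      strong_product_edge_iff[OF assms(1) graph_complete] by auto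
  have "degree ?F (x, 0) + degree ?F (x, 1) \<le> degree ?F a + degree ?F b" if "{a, b} \<in> ?F" for a b
    using graph_edgeD(2,3)[OF graph_F that] degree_ge assms(4) x
    by (auto simp: degree_strong_product_complete[OF assms(1)] intro!: add_mono diff_le_mono mult_le_mono1)
  then have "min_edge_degree ?F = card (adjacent_edges ?F (x, 0) (x, 1))"
    using min_edge_degree_eqI[OF graph_F edge] card_adjacent_edges[OF graph_F edge] by simp
  moreover have "card (adjacent_edges ?F (x, 0) (x, 1)) = 2 * n * \<delta> + 2 * n - 4"
    using card_adjacent_edges[OF graph_F edge] assms(4) x
    by (simp add: degree_strong_product_complete[OF assms(1)] algebra_simps)
  ultimately show ?thesis
    using restricted_edge_cut_strong_product_complete[OF assms(1) x(1) assms(4)] assms(4,5)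
      restricted_edge_cut_strong_product_complete_card_ge[OF assms(1) \<open>V \<noteq> {}\<close> _ degree_ge \<open>1 \<le> \<delta>\<close>]
    by (intro max_restricted_edge_connectedI[OF graph_F]) (auto simp: \<delta>_def)
qed

end
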